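(* Let $\phi_\tau$ and $\psi_\tau$ be the flows of $x'=x-x^2$ and $x'=x^2-x$ respectively (the reduced Milne-state equation $\Omega'=\mu\Omega(\Omega-1)$ for $\mu=-1$ and $\mu=+1$). Then $$\phi_\tau(x)=\frac{xe^\tau}{xe^\tau-x+1},\qquad \psi_\tau(x)=\frac{x}{x-xe^\tau+e^\tau},$$ and for every state $x\in(0,1)$ the function $\tau\mapsto\phi_\tau(x)-\psi_\tau(x)$ is strictly increasing. Consequently the sync function $\omega=|\phi_\tau(x)-\psi_\tau(x)|$ does not tend to $0$ as $\tau\to+\infty$, so a Friedmann domain governed by the reduced equation $\Omega'=-\mu\Omega+\mu\Omega^2$ (with $\mu$ ranging over values on both sides of $0$) is not dynamically synchronized in the future.
   Context: $\Omega$ is the density parameter of a Friedmann universe with perfect fluid, $\mu=3\gamma-2$ the fluid parameter treated as varying, $\tau$ the dimensionless time. For a reduced system $\Omega'=F(\Omega,\mu)$ with flow $\phi_\tau(\Omega,\mu)$, the sync function is $\omega=|\phi_\tau(\Omega_+,\mu_+)-\phi_\tau(\Omega_-,\mu_-)|$ for pairs of states $\Omega_\pm$ and parameter values $\mu_\pm$; the domain is dynamically synchronized in the future if $\omega\to0$ as $\tau\to+\infty$ for all $\mu\in\mathbb{R}$, $\Omega>0$, and it desynchronizes if for some pair of parameter values and/or states this limit fails to exist or is nonzero. *)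

theory Defs
  imports "HOL-Analysis.Analysis"
begin

definition phi_flow :: "real \<Rightarrow> real \<Rightarrow> real" where
  "phi_flow \<tau> x = x * exp \<tau> / (x * exp \<tau> - x + 1)"

definition psi_flow :: "real \<Rightarrow> real \<Rightarrow> real" where
  "psi_flow \<tau> x = x / (x - x * exp \<tau> + exp \<tau>)"

definition sync_omega :: "real \<Rightarrow> real \<Rightarrow> real" where
  "sync_omega \<tau> x = \<bar>phi_flow \<tau> x - psi_flow \<tau> x\<bar>"

end

theory Submission
  imports Defs
begin

text \<open>Both equations are logistic. For \<open>x' = x - x\<^sup>2\<close> with \<open>x(0) = x\<close> the quantity
  \<open>x(\<tau>) (x + (1 - x) e\<^sup>-\<^sup>\<tau>) - x\<close> satisfies a linear homogeneous equation and vanishes at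
  \<open>0\<close>, so it vanishes identically; this gives the closed form and uniqueness at once.
  The second equation is the first one run backwards in time, so \<open>\<psi>\<^sub>\<tau> = \<phi>\<^sub>-\<^sub>\<tau>\<close>.
  For \<open>0 < x < 1\<close>, \<open>\<phi>\<^sub>\<tau>(x)\<close> increases and \<open>\<psi>\<^sub>\<tau>(x)\<close> decreases in \<open>\<tau>\<close>, so their
  difference increases from its value \<open>0\<close> at \<open>\<tau> = 0\<close> and stays bounded away from \<open>0\<close>.\<close>

lemma real_antiderivative_exists:
  fixes f :: "real \<Rightarrow> real"
  assumes "\<And>t. isCont f t"
  obtains F where "\<And>t. (F has_real_derivative f t) (at t)"
proof -
  have "\<exists>F. \<forall>t :: real. (-\<infinity>::ereal) < t \<longrightarrow> t < (\<infinity>::ereal) \<longrightarrow>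
          (F has_vector_derivative f t) (at t)"
    by (rule einterval_antiderivative) (auto simp: assms)
  then obtain F where "\<And>t. (F has_vector_derivative f t) (at t)" by auto
  then show ?thesis
    using that by (metis has_real_derivative_iff_has_vector_derivative)
qed

lemma logistic_denominator_pos:
  assumes "x \<in> {0..1::real}"
  shows "0 < x + (1 - x) * exp (-t)"
proof (cases "x = 1")
  case False
  then have "0 < (1 - x) * exp (-t)" using assms by auto
  then show ?thesis using assms by auto
qed simp

lemma phi_flow_eq:
  assumes "x \<in> {0..1::real}"
  shows "phi_flow t x = x / (x + (1 - x) * exp (-t))"
proof -
  have "x * exp t - x + 1 = exp t * (x + (1 - x) * exp (-t))"
    by (simp add: algebra_simps exp_minus_inverse)
  then show ?thesis
    unfolding phi_flow_def using logistic_denominator_pos[OF assms, of t]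
    by (simp add: exp_minus field_simps)
qed

lemma psi_flow_eq_phi_flow_reverse: "psi_flow t x = phi_flow (-t) x"
  unfolding phi_flow_def psi_flow_def
  by (simp add: exp_minus field_simps)

lemma phi_flow_zero [simp]: "phi_flow 0 x = x"
  by (simp add: phi_flow_def)

lemma psi_flow_zero [simp]: "psi_flow 0 x = x"
  by (simp add: psi_flow_def)

lemma has_real_derivative_reflect:
  assumes "(f has_real_derivative f') (at (-t))"
  shows "((\<lambda>s. f (-s)) has_real_derivative -f') (at t)"
  using DERIV_chain2[of f f' uminus t, OF assms DERIV_minus[OF DERIV_ident]] by simp

lemma phi_flow_has_real_derivative:
  assumes "x \<in> {0..1::real}"
  shows "((\<lambda>t. phi_flow t x) has_real_derivative (phi_flow \<tau> x - (phi_flow \<tau> x)\<^sup>2)) (at \<tau>)"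
proof -
  define D where "D t = x + (1 - x) * exp (-t)" for t
  have D_pos: "0 < D \<tau>" unfolding D_def by (rule logistic_denominator_pos[OF assms])
  have "((\<lambda>t. x / D t) has_real_derivative - (x * (x - D \<tau>)) / (D \<tau>)\<^sup>2) (at \<tau>)"
    unfolding D_def using D_pos[unfolded D_def]
    by (auto intro!: derivative_eq_intros simp: power2_eq_square algebra_simps)
  also have "- (x * (x - D \<tau>)) / (D \<tau>)\<^sup>2 = x / D \<tau> - (x / D \<tau>)\<^sup>2"
    using D_pos by (simp add: field_simps power2_eq_square)
  finally show ?thesis
    using phi_flow_eq[OF assms] by (simp add: D_def)
qed

lemma psi_flow_has_real_derivative:
  assumes "x \<in> {0..1::real}"
  shows "((\<lambda>t. psi_flow t x) has_real_derivative ((psi_flow \<tau> x)\<^sup>2 - psi_flow \<tau> x)) (at \<tau>)"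
  using has_real_derivative_reflect[OF phi_flow_has_real_derivative[OF assms, of "-\<tau>"]]
  by (simp add: psi_flow_eq_phi_flow_reverse)

text \<open>With \<open>D t = x + (1 - x) e\<^sup>-\<^sup>t\<close> one has \<open>D' = x - D\<close>, so \<open>g = f D - x\<close> satisfies
  \<open>g' = - f g\<close>; multiplying by the integrating factor \<open>exp F\<close>, \<open>F' = f\<close>, makes it constant.\<close>

lemma logistic_solution_conserved:
  fixes f :: "real \<Rightarrow> real"
  assumes f0: "f 0 = x"
    and f': "\<And>t. (f has_real_derivative (f t - (f t)\<^sup>2)) (at t)"
  shows "f t * (x + (1 - x) * exp (-t)) = x"
proof -
  have "isCont f s" for s using f' by (rule DERIV_isCont)
  then obtain F where F': "\<And>s. (F has_real_derivative f s) (at s)"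
    using real_antiderivative_exists by blast
  define H where "H s = (f s * (x + (1 - x) * exp (-s)) - x) * exp (F s)" for s
  have "(H has_real_derivative 0) (at s)" for s
  proof -
    have "(H has_real_derivative
        ((f s - (f s)\<^sup>2) * (x + (1 - x) * exp (-s)) + f s * ((1 - x) * (exp (-s) * (-1)))) * exp (F s)
        + (f s * (x + (1 - x) * exp (-s)) - x) * (exp (F s) * f s)) (at s)"
      unfolding H_def[abs_def] by (rule derivative_eq_intros f' F' refl | simp)+
    then show ?thesis by (simp add: algebra_simps power2_eq_square)
  qed
  then have "H t = H 0" by (meson DERIV_isconst_all)
  then show ?thesis by (simp add: H_def f0)
qed

lemma phi_flow_unique:
  fixes f :: "real \<Rightarrow> real"
  assumes "x \<in> {0..1}" and "f 0 = x"
    and "\<And>t. (f has_real_derivative (f t - (f t)\<^sup>2)) (at t)"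
  shows "f t = phi_flow t x"
  using logistic_solution_conserved[OF assms(2,3), of t] logistic_denominator_pos[OF assms(1), of t]
  by (simp add: phi_flow_eq[OF assms(1)] eq_divide_eq)

lemma psi_flow_unique:
  fixes f :: "real \<Rightarrow> real"
  assumes "x \<in> {0..1}" and "f 0 = x"
    and f': "\<And>t. (f has_real_derivative ((f t)\<^sup>2 - f t)) (at t)"
  shows "f t = psi_flow t x"
proof -
  have "(\<lambda>s. f (-s)) (-t) = phi_flow (-t) x"
  proof (rule phi_flow_unique[OF assms(1)])
    fix s
    show "((\<lambda>s. f (-s)) has_real_derivative (f (-s) - (f (-s))\<^sup>2)) (at s)"
      using has_real_derivative_reflect[OF f'[of "-s"]] by simp
  qed (simp add: assms(2))
  then show ?thesis by (simp add: psi_flow_eq_phi_flow_reverse)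
qed

lemma phi_flow_strict_mono:
  assumes "x \<in> {0<..<1::real}"
  shows "strict_mono (\<lambda>t. phi_flow t x)"
proof (rule strict_monoI)
  fix s t :: real
  assume "s < t"
  have x: "x \<in> {0..1}" using assms by simp
  have "x + (1 - x) * exp (-t) < x + (1 - x) * exp (-s)"
    using assms \<open>s < t\<close> by simp
  then have "x / (x + (1 - x) * exp (-s)) < x / (x + (1 - x) * exp (-t))"
    using assms logistic_denominator_pos[OF x]
    by (intro divide_strict_left_mono mult_pos_pos) auto
  then show "phi_flow s x < phi_flow t x"
    by (simp add: phi_flow_eq[OF x])
qed

lemma flow_difference_strict_mono:
  assumes "x \<in> {0<..<1::real}"
  shows "strict_mono (\<lambda>t. phi_flow t x - psi_flow t x)"
proof (rule strict_monoI)
  fix s t :: real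
  assume "s < t"
  then have "phi_flow s x < phi_flow t x" "phi_flow (-t) x < phi_flow (-s) x"
    using strict_monoD[OF phi_flow_strict_mono[OF assms]] by simp_all
  then show "phi_flow s x - psi_flow s x < phi_flow t x - psi_flow t x"
    by (simp add: psi_flow_eq_phi_flow_reverse)
qed

lemma mono_abs_not_tendsto_zero:
  fixes g :: "real \<Rightarrow> real"
  assumes "mono g" and "0 < g a"
  shows "\<not> ((\<lambda>t. \<bar>g t\<bar>) \<longlongrightarrow> 0) at_top"
proof
  assume "((\<lambda>t. \<bar>g t\<bar>) \<longlongrightarrow> 0) at_top"
  then have "eventually (\<lambda>t. \<bar>g t\<bar> < g a) at_top"
    using assms(2) by (rule order_tendstoD(2))
  moreover have "eventually (\<lambda>t. a \<le> t) at_top" by (rule eventually_ge_at_top)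
  ultimately have "eventually (\<lambda>t. \<bar>g t\<bar> < g a \<and> a \<le> t) at_top"
    by (rule eventually_conj)
  then obtain t where "\<bar>g t\<bar> < g a" and "a \<le> t"
    using eventually_happens'[OF trivial_limit_at_top_linorder] by blast
  then show False using monoD[OF assms(1), of a t] by linarith
qed

theorem mainTheorem8:
  shows
    \<comment> \<open>phi is the flow of x' = x - x^2: it solves the IVP, and every global solution agrees with it\<close>
    "(\<forall>x\<in>{0..1}. phi_flow 0 x = x \<and>
        (\<forall>\<tau>. ((\<lambda>t. phi_flow t x) has_real_derivative
                 (phi_flow \<tau> x - (phi_flow \<tau> x)^2)) (at \<tau>)) \<and>
        (\<forall>f :: real \<Rightarrow> real. f 0 = x \<and>
           (\<forall>t. (f has_real_derivative (f t - (f t)^2)) (at t))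
           \<longrightarrow> (\<forall>t. f t = phi_flow t x)))
   \<and> (\<forall>x\<in>{0..1}. psi_flow 0 x = x \<and>
        (\<forall>\<tau>. ((\<lambda>t. psi_flow t x) has_real_derivative
                 ((psi_flow \<tau> x)^2 - psi_flow \<tau> x)) (at \<tau>)) \<and>
        (\<forall>f :: real \<Rightarrow> real. f 0 = x \<and>
           (\<forall>t. (f has_real_derivative ((f t)^2 - f t)) (at t))
           \<longrightarrow> (\<forall>t. f t = psi_flow t x)))
   \<and> (\<forall>x\<in>{0<..<1}. strict_mono (\<lambda>\<tau>. phi_flow \<tau> x - psi_flow \<tau> x))
   \<and> (\<forall>x\<in>{0<..<1}. \<not> ((\<lambda>\<tau>. sync_omega \<tau> x) \<longlongrightarrow> 0) at_top)"
proof -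
  have no_sync: "\<not> ((\<lambda>\<tau>. sync_omega \<tau> x) \<longlongrightarrow> 0) at_top" if x: "x \<in> {0<..<1}" for x
  proof -
    let ?d = "\<lambda>t. phi_flow t x - psi_flow t x"
    have "strict_mono ?d" by (rule flow_difference_strict_mono[OF x])
    then have "mono ?d" and "?d 0 < ?d 1"
      using strict_monoD[of ?d 0 1] by (simp_all add: strict_mono_mono)
    then show ?thesis
      using mono_abs_not_tendsto_zero[of ?d 1] by (simp add: sync_omega_def)
  qed
  show ?thesis
    using phi_flow_has_real_derivative phi_flow_unique psi_flow_has_real_derivative
      psi_flow_unique flow_difference_strict_mono no_sync
    by auto
qed

end
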